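(* Let $L$ be an infinite field, let $\mathcal{T}$ be a non-discrete system of topologies over $L$, let $K$ be a proper subfield of $L$, let $m\ge 1$, and let $O$ be a nonempty $\mathcal{T}$-open subset of $L^m = \mathbb{A}^m_L(L)$. Then $|O \setminus K^m| = |L|$.
   Context: An $L$-variety is a separated $L$-scheme of finite type (not necessarily reduced); $V(L)$ denotes its set of $L$-points. A system of topologies $\mathcal{T}$ over $L$ is a choice of topology on $V(L)$ for every $L$-variety $V$ such that for every morphism $f: V \to W$ of $L$-varieties: (1) the induced map $V(L) \to W(L)$ is continuous; (2) if $f$ is an open immersion then $V(L) \to W(L)$ is a topological open embedding; (3) if $f$ is a closed immersion then $V(L)\to W(L)$ is a topological closed embedding. $\mathcal{T}$ is called discrete if the $\mathcal{T}$-topology on $L = \mathbb{A}^1_L(L)$ is discrete, and non-discrete otherwise. *)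

theory Defs
  imports "HOL-Analysis.Analysis" "HOL-Library.Equipollence"
begin

definition affine_space :: "nat \<Rightarrow> 'a list set" where
  "affine_space n = {x. length x = n}"

inductive polyfun :: "nat \<Rightarrow> ('a::field list \<Rightarrow> 'a) \<Rightarrow> bool" for n where
  pf_const: "polyfun n (\<lambda>x. c)"
| pf_var: "i < n \<Longrightarrow> polyfun n (\<lambda>x. x ! i)"
| pf_add: "polyfun n f \<Longrightarrow> polyfun n g \<Longrightarrow> polyfun n (\<lambda>x. f x + g x)"
| pf_mult: "polyfun n f \<Longrightarrow> polyfun n g \<Longrightarrow> polyfun n (\<lambda>x. f x * g x)"

text \<open>Sets of L-points of closed subschemes of affine n-space (zero sets of families of polynomials).\<close>

definition algebraic :: "nat \<Rightarrow> 'a::field list set \<Rightarrow> bool" where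
  "algebraic n X \<longleftrightarrow> (\<exists>F. (\<forall>f\<in>F. polyfun n f) \<and>
      X = {x \<in> affine_space n. \<forall>f\<in>F. f x = 0})"

definition polymap :: "nat \<Rightarrow> nat \<Rightarrow> ('a::field list \<Rightarrow> 'a) list \<Rightarrow> bool" where
  "polymap n k g \<longleftrightarrow> length g = k \<and> (\<forall>f\<in>set g. polyfun n f)"

definition apply_polymap :: "('a list \<Rightarrow> 'a) list \<Rightarrow> 'a list \<Rightarrow> 'a list" where
  "apply_polymap g x = map (\<lambda>f. f x) g"

text \<open>The affine chart X_f = {(x,t) : x \<in> X, f(x) t = 1} in L^(n+1), i.e. the L-points of the
  basic open subscheme D(f) of X, which maps onto {x \<in> X. f x \<noteq> 0} by dropping the last coordinate.\<close>

definition chart :: "'a::field list set \<Rightarrow> ('a list \<Rightarrow> 'a) \<Rightarrow> 'a list set" where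
  "chart X f = {x @ [t] | x t. x \<in> X \<and> f x * t = 1}"

text \<open>A system of topologies over L, restricted to affine L-varieties (represented by their sets of
  L-points inside L^n).  T n X is the topology on X(L) for an algebraic subset X of L^n.
  Axioms: (1) morphisms (polynomial maps) are continuous; (3) closed immersions of affine
  varieties (inclusions of algebraic subsets) are closed topological embeddings; (2) the
  basic open immersions D(f) \<rightarrow> X are open topological embeddings.\<close>

definition affine_system_of_topologies ::
    "(nat \<Rightarrow> 'a::field list set \<Rightarrow> 'a list topology) \<Rightarrow> bool" where
  "affine_system_of_topologies T \<longleftrightarrow>
     (\<forall>n X. algebraic n X \<longrightarrow> topspace (T n X) = X)
   \<and> (\<forall>n k X Y g. algebraic n X \<and> algebraic k Y \<and> polymap n k g \<and> apply_polymap g ` X \<subseteq> Y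
        \<longrightarrow> continuous_map (T n X) (T k Y) (apply_polymap g))
   \<and> (\<forall>n X Y. algebraic n X \<and> algebraic n Y \<and> X \<subseteq> Y
        \<longrightarrow> T n X = subtopology (T n Y) X \<and> closedin (T n Y) X)
   \<and> (\<forall>n X f. algebraic n X \<and> polyfun n f
        \<longrightarrow> openin (T n X) {x \<in> X. f x \<noteq> 0}
          \<and> homeomorphic_map (T (Suc n) (chart X f))
               (subtopology (T n X) {x \<in> X. f x \<noteq> 0}) (take n))"

definition non_discrete :: "(nat \<Rightarrow> 'a list set \<Rightarrow> 'a list topology) \<Rightarrow> bool" where
  "non_discrete T \<longleftrightarrow> T 1 (affine_space 1) \<noteq> discrete_topology (affine_space 1)"

definition is_subfield :: "'a::field set \<Rightarrow> bool" where
  "is_subfield K \<longleftrightarrow> 0 \<in> K \<and> 1 \<in> K \<and> (\<forall>x\<in>K. \<forall>y\<in>K. x + y \<in> K \<and> x * y \<in> K)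
     \<and> (\<forall>x\<in>K. - x \<in> K) \<and> (\<forall>x\<in>K. x \<noteq> 0 \<longrightarrow> inverse x \<in> K)"

end

theory Submission
  imports Defs
begin

text \<open>
  If V is open in L and q \<in> V, then V is
  not {q}: otherwise its translates would make every point open. Applied to the open set of
  x \<in> V with a(x - q) + q \<in> V, this gives x \<noteq> q with x and a(x - q) + q in V, so every
  a \<noteq> 0 is a quotient (y - q)/(x - q) of points of V - {q} and |V - {q}| = |L|.
  To avoid the proper subfield K, pick c \<notin> K and q \<in> V \<inter> K: the dilation
  x \<mapsto> c(x - q) + q sends K - {q} out of K, so the open set W of x \<in> V with
  c(x - q) + q \<in> V satisfies |W - {q}| \<le> 2|V - K|. An open subset of L^m meets a
  coordinate line in an open subset of L, and |L^m| = |L|.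
\<close>

lemma times_self_lepoll_infinite: "infinite B \<Longrightarrow> B \<times> B \<lesssim> B"
  using card_of_Times_same_infinite eqpoll_iff_card_of_ordIso eqpoll_imp_lepoll by blast

lemma lepoll_square_imp_lepoll:
  assumes "infinite A" and "A \<lesssim> B \<times> B"
  shows "A \<lesssim> B"
proof -
  have "(UNIV :: nat set) \<lesssim> B \<times> B"
    using assms(1) lepoll_trans[OF _ assms(2)] unfolding infinite_le_lepoll by blast
  then have "infinite B"
    using finite_cartesian_product unfolding infinite_le_lepoll[symmetric] by blast
  then show ?thesis
    using lepoll_trans[OF assms(2) times_self_lepoll_infinite] by blast
qed

lemma lepoll_times_finite_imp_lepoll:
  assumes "infinite A" and "A \<lesssim> B \<times> C" and "finite C"
  shows "A \<lesssim> B"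
proof -
  have "(UNIV :: nat set) \<lesssim> B \<times> C"
    using assms(1) lepoll_trans[OF _ assms(2)] unfolding infinite_le_lepoll by blast
  then have "infinite B"
    using assms(3) finite_cartesian_product unfolding infinite_le_lepoll[symmetric] by blast
  then have "B \<times> C \<lesssim> B \<times> B"
    using times_lepoll_mono[OF lepoll_refl finite_lepoll_infinite] assms(3) by blast
  then have "A \<lesssim> B \<times> B"
    using assms(2) lepoll_trans by blast
  with assms(1) show ?thesis
    by (rule lepoll_square_imp_lepoll)
qed

lemma affine_space_lepoll:
  assumes "infinite (UNIV :: 'a set)"
  shows "(affine_space n :: 'a list set) \<lesssim> (UNIV :: 'a set)"
proof (induction n)
  case 0
  have "affine_space 0 \<subseteq> (\<lambda>_::'a. ([]::'a list)) ` UNIV"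
    by (auto simp: affine_space_def)
  then show ?case by (rule subset_image_lepoll)
next
  case (Suc n)
  have "affine_space (Suc n) \<subseteq> (\<lambda>(a, xs). a # xs) ` ((UNIV::'a set) \<times> affine_space n)"
    unfolding affine_space_def by (auto simp: length_Suc_conv)
  then have "(affine_space (Suc n) :: 'a list set) \<lesssim> (UNIV::'a set) \<times> (affine_space n :: 'a list set)"
    by (rule subset_image_lepoll)
  also have "\<dots> \<lesssim> (UNIV::'a set) \<times> (UNIV::'a set)"
    using times_lepoll_mono[OF lepoll_refl Suc] .
  also have "\<dots> \<lesssim> (UNIV::'a set)"
    using times_self_lepoll_infinite[OF assms] .
  finally show ?case .
qed

lemma mem_affine_space_1_iff: "x \<in> affine_space (Suc 0) \<longleftrightarrow> (\<exists>t. x = [t])"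
  unfolding affine_space_def by (auto simp: length_Suc_conv)

lemma algebraic_affine_space: "algebraic n (affine_space n :: 'a::field list set)"
  unfolding algebraic_def by (rule exI[of _ "{}"]) auto

lemma topspace_affine_space:
  assumes "affine_system_of_topologies T"
  shows "topspace (T n (affine_space n)) = (affine_space n :: 'a::field list set)"
proof -
  have "\<forall>n X. algebraic n X \<longrightarrow> topspace (T n X) = (X :: 'a list set)"
    using assms unfolding affine_system_of_topologies_def by (rule conjunct1)
  then show ?thesis
    using algebraic_affine_space by blast
qed

lemma continuous_map_apply_polymap:
  assumes "affine_system_of_topologies T" and "polymap n k g"
  shows "continuous_map (T n (affine_space n)) (T k (affine_space k)) (apply_polymap g)"
proof -
  have "\<forall>n k X Y g. algebraic n X \<and> algebraic k Y \<and> polymap n k g \<and> apply_polymap g ` X \<subseteq> Y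
          \<longrightarrow> continuous_map (T n X) (T k Y) (apply_polymap g)"
    using assms(1) unfolding affine_system_of_topologies_def by (elim conjE)
  moreover have "apply_polymap g ` affine_space n \<subseteq> (affine_space k :: 'a::field list set)"
    using assms(2) by (auto simp: polymap_def apply_polymap_def affine_space_def)
  ultimately show ?thesis
    using assms(2) algebraic_affine_space by blast
qed

lemma continuous_map_line_affine:
  assumes "affine_system_of_topologies T"
  shows "continuous_map (T 1 (affine_space 1)) (T 1 (affine_space 1))
           (\<lambda>x::'a::field list. [a * x!0 + b])"
proof -
  have "polyfun 1 (\<lambda>x::'a list. a * x!0 + b)"
    by (intro pf_add pf_mult pf_const pf_var) simp
  then have g: "polymap 1 1 [\<lambda>x::'a list. a * x!0 + b]"
    by (simp add: polymap_def)
  have "apply_polymap [\<lambda>x::'a list. a * x!0 + b] = (\<lambda>x. [a * x!0 + b])"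
    by (simp add: apply_polymap_def fun_eq_iff)
  with continuous_map_apply_polymap[OF assms g] show ?thesis
    by simp
qed

lemma continuous_map_line_Cons:
  assumes "affine_system_of_topologies T"
  shows "continuous_map (T 1 (affine_space 1)) (T (Suc (length ps)) (affine_space (Suc (length ps))))
           (\<lambda>x::'a::field list. x!0 # ps)"
proof -
  let ?g = "(\<lambda>x::'a list. x!0) # map (\<lambda>c x. c) ps"
  have g: "polymap 1 (Suc (length ps)) ?g"
    by (auto simp: polymap_def intro: pf_const pf_var)
  have "apply_polymap ?g = (\<lambda>x. x!0 # ps)"
    by (simp add: apply_polymap_def fun_eq_iff comp_def)
  with continuous_map_apply_polymap[OF assms g] show ?thesis
    by simp
qed

lemma openin_line_affine_preimage:
  assumes "affine_system_of_topologies T" and "openin (T 1 (affine_space 1)) V"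
  shows "openin (T 1 (affine_space 1)) {x \<in> affine_space 1. [a * x!0 + b] \<in> (V :: 'a::field list set)}"
  using openin_continuous_map_preimage[OF continuous_map_line_affine[OF assms(1)] assms(2)]
  by (simp add: topspace_affine_space[OF assms(1)])

lemma open_line_ne_singleton:
  fixes T :: "nat \<Rightarrow> 'a::field list set \<Rightarrow> 'a list topology"
  assumes T: "affine_system_of_topologies T" and "non_discrete T"
    and V: "openin (T 1 (affine_space 1)) V"
  shows "V \<noteq> {[q]}"
proof
  assume "V = {[q]}"
  then have translate: "{x \<in> affine_space 1. [1 * x!0 + (q - t)] \<in> V} = {[t]}" for t
    by (auto simp: mem_affine_space_1_iff)
  have "openin (T 1 (affine_space 1)) {x}" if x: "x \<in> affine_space 1" for x
  proof -
    obtain t where "x = [t]"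
      using x by (auto simp: mem_affine_space_1_iff)
    then show ?thesis
      using openin_line_affine_preimage[OF T V, of 1 "q - t"] unfolding translate by simp
  qed
  then have "T 1 (affine_space 1) = discrete_topology (affine_space 1)"
    using discrete_topology_unique topspace_affine_space[OF T] by metis
  with \<open>non_discrete T\<close> show False
    unfolding non_discrete_def by simp
qed

lemma open_line_dilation_pair:
  fixes T :: "nat \<Rightarrow> 'a::field list set \<Rightarrow> 'a list topology"
  assumes T: "affine_system_of_topologies T" and nd: "non_discrete T"
    and V: "openin (T 1 (affine_space 1)) V" and q: "[q] \<in> V"
  shows "\<exists>x. x \<noteq> q \<and> [x] \<in> V \<and> [a * (x - q) + q] \<in> V"
proof -
  define W where "W = {x \<in> affine_space 1. [a * x!0 + (q - a * q)] \<in> V} \<inter> V"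
  have W: "openin (T 1 (affine_space 1)) W"
    unfolding W_def using openin_line_affine_preimage[OF T V] V by blast
  have "[q] \<in> W"
    unfolding W_def using q by (auto simp: mem_affine_space_1_iff algebra_simps)
  with open_line_ne_singleton[OF T nd W] obtain y where "y \<in> W" "y \<noteq> [q]"
    by blast
  moreover from this obtain x where "y = [x]"
    unfolding W_def by (auto simp: mem_affine_space_1_iff)
  ultimately show ?thesis
    unfolding W_def by (auto simp: algebra_simps)
qed

lemma subfield_affine_notin:
  assumes "is_subfield K" and "q \<in> K" and "x \<in> K" and "x \<noteq> q" and "c \<notin> K"
  shows "c * (x - q) + q \<notin> K"
proof
  assume y: "c * (x - q) + q \<in> K"
  have diff: "u - v \<in> K" if "u \<in> K" "v \<in> K" for u v
    using assms(1) that unfolding is_subfield_def by (metis diff_conv_add_uminus)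
  have "(c * (x - q) + q - q) * inverse (x - q) \<in> K"
    using assms(1) diff[OF y assms(2)] diff[OF assms(3,2)] assms(4)
    unfolding is_subfield_def by simp
  moreover have "x - q \<noteq> 0"
    using assms(4) by simp
  ultimately show False
    using assms(5) by (simp add: mult.assoc)
qed

lemma open_line_punctured_lepoll:
  fixes T :: "nat \<Rightarrow> 'a::field list set \<Rightarrow> 'a list topology"
  assumes "infinite (UNIV :: 'a set)"
    and T: "affine_system_of_topologies T" and nd: "non_discrete T"
    and V: "openin (T 1 (affine_space 1)) V" and q: "[q] \<in> V"
  shows "(UNIV :: 'a set) \<lesssim> {x. [x] \<in> V \<and> x \<noteq> q}"
proof -
  let ?P = "{x. [x] \<in> V \<and> x \<noteq> q}"
  have "UNIV - {0} \<subseteq> (\<lambda>(x, y). (y - q) / (x - q)) ` (?P \<times> ?P)"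
  proof
    fix a :: 'a
    assume "a \<in> UNIV - {0}"
    moreover obtain x where "x \<noteq> q" "[x] \<in> V" "[a * (x - q) + q] \<in> V"
      using open_line_dilation_pair[OF T nd V q] by blast
    ultimately show "a \<in> (\<lambda>(x, y). (y - q) / (x - q)) ` (?P \<times> ?P)"
      by (intro image_eqI[of _ _ "(x, a * (x - q) + q)"]) auto
  qed
  then have "UNIV - {0 :: 'a} \<lesssim> ?P \<times> ?P"
    by (rule subset_image_lepoll)
  moreover have "infinite (UNIV - {0 :: 'a})"
    using assms(1) by simp
  ultimately have "UNIV - {0 :: 'a} \<lesssim> ?P"
    using lepoll_square_imp_lepoll by blast
  moreover have "(UNIV :: 'a set) \<approx> UNIV - {0 :: 'a}"
    using infinite_insert_eqpoll[OF \<open>infinite (UNIV - {0 :: 'a})\<close>, of 0] by simp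
  ultimately show ?thesis
    using lepoll_trans1 by blast
qed

lemma open_line_diff_subfield_lepoll:
  fixes T :: "nat \<Rightarrow> 'a::field list set \<Rightarrow> 'a list topology"
  assumes inf: "infinite (UNIV :: 'a set)"
    and T: "affine_system_of_topologies T" and nd: "non_discrete T"
    and K: "is_subfield K" and "K \<noteq> UNIV"
    and V: "openin (T 1 (affine_space 1)) V" and "V \<noteq> {}"
  shows "(UNIV :: 'a set) \<lesssim> {t. [t] \<in> V \<and> t \<notin> K}"
proof -
  let ?S = "{t. [t] \<in> V \<and> t \<notin> K}"
  obtain c where c: "c \<notin> K"
    using \<open>K \<noteq> UNIV\<close> by blast
  then have "c \<noteq> 0"
    using K unfolding is_subfield_def by auto
  show ?thesis
  proof (cases "\<exists>q. [q] \<in> V \<and> q \<in> K")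
    case False
    have "V \<subseteq> affine_space 1"
      using openin_subset[OF V] by (simp add: topspace_affine_space[OF T])
    moreover obtain x where "x \<in> V"
      using \<open>V \<noteq> {}\<close> by blast
    ultimately obtain q where q: "[q] \<in> V"
      by (auto simp: subset_iff mem_affine_space_1_iff)
    have "{x. [x] \<in> V \<and> x \<noteq> q} \<subseteq> ?S"
      using False by auto
    then show ?thesis
      using lepoll_trans[OF open_line_punctured_lepoll[OF inf T nd V q] subset_imp_lepoll] by blast
  next
    case True
    then obtain q where q: "[q] \<in> V" "q \<in> K"
      by blast
    define W where "W = {x \<in> affine_space 1. [c * x!0 + (q - c * q)] \<in> V} \<inter> V"
    have W: "openin (T 1 (affine_space 1)) W"
      unfolding W_def by (intro openin_Int openin_line_affine_preimage[OF T V] V)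
    have "[q] \<in> W"
      unfolding W_def using q by (auto simp: mem_affine_space_1_iff algebra_simps)
    define h where "h = (\<lambda>(s, b :: bool). if b then s else (s - q) / c + q)"
    have "{x. [x] \<in> W \<and> x \<noteq> q} \<subseteq> h ` (?S \<times> UNIV)"
    proof
      fix x
      assume "x \<in> {x. [x] \<in> W \<and> x \<noteq> q}"
      then have x: "[x] \<in> V" "[c * (x - q) + q] \<in> V" "x \<noteq> q"
        unfolding W_def by (auto simp: algebra_simps)
      show "x \<in> h ` (?S \<times> UNIV)"
      proof (cases "x \<in> K")
        case False
        then have "(x, True) \<in> ?S \<times> UNIV"
          using x by simp
        moreover have "x = h (x, True)"
          by (simp add: h_def)
        ultimately show ?thesis
          by (rule rev_image_eqI)
      next
        case True
        then have "(c * (x - q) + q, False) \<in> ?S \<times> UNIV"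
          using subfield_affine_notin[OF K q(2) True x(3) c] x(2) by simp
        moreover have "x = h (c * (x - q) + q, False)"
          using \<open>c \<noteq> 0\<close> by (simp add: h_def)
        ultimately show ?thesis
          by (rule rev_image_eqI)
      qed
    qed
    then have "{x. [x] \<in> W \<and> x \<noteq> q} \<lesssim> ?S \<times> (UNIV :: bool set)"
      by (rule subset_image_lepoll)
    with open_line_punctured_lepoll[OF inf T nd W \<open>[q] \<in> W\<close>]
    have "(UNIV :: 'a set) \<lesssim> ?S \<times> (UNIV :: bool set)"
      by (rule lepoll_trans)
    then show ?thesis
      by (rule lepoll_times_finite_imp_lepoll[OF inf]) simp
  qed
qed

theorem propositionB:
  fixes T :: "nat \<Rightarrow> 'a::field list set \<Rightarrow> 'a list topology"
    and K :: "'a set" and m :: nat and U :: "'a list set"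
  assumes "infinite (UNIV :: 'a set)"
    and "affine_system_of_topologies T"
    and "non_discrete T"
    and "is_subfield K" and "K \<noteq> UNIV"
    and "m \<ge> 1"
    and "openin (T m (affine_space m)) U" and "U \<noteq> {}"
  shows "U - {x \<in> affine_space m. set x \<subseteq> K} \<approx> (UNIV :: 'a set)"
proof (rule lepoll_antisym)
  have U: "U \<subseteq> affine_space m"
    using openin_subset[OF assms(7)] by (simp add: topspace_affine_space[OF assms(2)])
  then show "U - {x \<in> affine_space m. set x \<subseteq> K} \<lesssim> (UNIV :: 'a set)"
    using lepoll_trans[OF subset_imp_lepoll affine_space_lepoll[OF assms(1)]] by blast
  obtain p where "p \<in> U"
    using assms(8) by blast
  with U obtain a ps where p: "a # ps \<in> U" and m: "m = Suc (length ps)"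
    using assms(6) by (cases p) (auto simp: affine_space_def)
  define V where "V = {x \<in> affine_space 1. x!0 # ps \<in> U}"
  have V: "openin (T 1 (affine_space 1)) V"
    using openin_continuous_map_preimage[OF continuous_map_line_Cons[OF assms(2)] assms(7)[unfolded m]]
    unfolding V_def topspace_affine_space[OF assms(2)] .
  have "[a] \<in> V"
    unfolding V_def using p by (simp add: mem_affine_space_1_iff)
  have slice: "{t. [t] \<in> V \<and> t \<notin> K} \<subseteq> hd ` (U - {x \<in> affine_space m. set x \<subseteq> K})"
  proof
    fix t
    assume "t \<in> {t. [t] \<in> V \<and> t \<notin> K}"
    then have "t # ps \<in> U - {x \<in> affine_space m. set x \<subseteq> K}"
      unfolding V_def by simp
    then show "t \<in> hd ` (U - {x \<in> affine_space m. set x \<subseteq> K})"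
      by (rule rev_image_eqI) simp
  qed
  have "(UNIV :: 'a set) \<lesssim> {t. [t] \<in> V \<and> t \<notin> K}"
    using open_line_diff_subfield_lepoll[OF assms(1-5) V] \<open>[a] \<in> V\<close> by blast
  also have "\<dots> \<lesssim> U - {x \<in> affine_space m. set x \<subseteq> K}"
    using slice by (rule subset_image_lepoll)
  finally show "(UNIV :: 'a set) \<lesssim> U - {x \<in> affine_space m. set x \<subseteq> K}" .
qed

end
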